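(* Let $\Sigma_0$ be a smooth, non-null, codimension-$k$ surface in a $d$-dimensional spacetime, and let $\Sigma_{\lambda_1,\dots,\lambda_k}$ be a $k$-parameter deformation of $\Sigma_0$ whose normal subspaces (the normal bundles of the leaves) form a locally integrable distribution. Extend the unit $k$-normal form $\mathbf{N}$ to a neighborhood as the unit $k$-normal form of the leaves of the deformation. Then the divergence $\nabla_a N^{a\cdots}$ has support only along directions normal to the leaves of the deformation, i.e. it vanishes whenever a vector tangent to the leaves is contracted into any of its free indices. In particular, its restriction $\nabla_a N^{a\cdots}|_{\Sigma_0}$ is supported in the normal bundle $\mathrm{N}(\Sigma_0)$.
   Context: A $k$-parameter deformation of a codimension-$k$ surface $\Sigma_0$ is a smooth family of codimension-$k$ surfaces $\Sigma_{\lambda_1,\dots,\lambda_k}$ that coincides with $\Sigma_0$ at $\lambda_1=\dots=\lambda_k=0$ and foliates a neighborhood. For a non-null codimension-$k$ surface, the unit $k$-normal form is the unique $k$-form $N_{a_1\dots a_k}$ on its normal bundle satisfying $N_{a_1\dots a_k}N^{a_1\dots a_k}=(-1)^s k!$, where $s$ is the number of minus signs in the signature of the normal bundle, with sign fixed by a chosen orientation. *)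

theory Defs
  imports "HOL-Analysis.Analysis"
begin

text \<open>Local coordinate rendering. The spacetime (a neighbourhood of Sigma_0) is
an open set U in R^d, d = CARD('n); the metric is a matrix-valued function g.\<close>

definition pd :: "'n::finite \<Rightarrow> (real^'n \<Rightarrow> real) \<Rightarrow> real^'n \<Rightarrow> real" where
  "pd i f x = frechet_derivative f (at x) (axis i 1)"

fun Ck :: "nat \<Rightarrow> (real^'n::finite) set \<Rightarrow> (real^'n \<Rightarrow> real) \<Rightarrow> bool" where
  "Ck 0 U f = continuous_on U f"
| "Ck (Suc m) U f = (f differentiable_on U \<and> (\<forall>i. Ck m U (pd i f)))"

definition smooth_on :: "(real^'n::finite) set \<Rightarrow> (real^'n \<Rightarrow> real) \<Rightarrow> bool" where
  "smooth_on U f = (\<forall>m. Ck m U f)"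

definition grad :: "(real^'n::finite \<Rightarrow> real) \<Rightarrow> real^'n \<Rightarrow> real^'n" where
  "grad f x = (\<chi> a. pd a f x)"

definition lin_indep_fam :: "(nat \<Rightarrow> real^'n::finite) \<Rightarrow> nat \<Rightarrow> bool" where
  "lin_indep_fam v m = (\<forall>c. (\<Sum>i<m. c i *\<^sub>R v i) = 0 \<longrightarrow> (\<forall>i<m. c i = 0))"

definition ginv :: "(real^'n::finite \<Rightarrow> real^'n^'n) \<Rightarrow> real^'n \<Rightarrow> real^'n^'n" where
  "ginv g x = matrix_inv (g x)"

definition gdot :: "(real^'n::finite \<Rightarrow> real^'n^'n) \<Rightarrow> real^'n \<Rightarrow> real^'n \<Rightarrow> real^'n \<Rightarrow> real" where
  "gdot g x v w = (\<Sum>a\<in>UNIV. \<Sum>b\<in>UNIV. g x $ a $ b * v $ a * w $ b)"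

definition lorentzian_at :: "(real^'n::finite \<Rightarrow> real^'n^'n) \<Rightarrow> real^'n \<Rightarrow> bool" where
  "lorentzian_at g x = (\<exists>(P :: real^'n^'n) i0. invertible P \<and>
      transpose P ** g x ** P = (\<chi> i j. if i = j then (if i = i0 then -1 else 1) else 0))"

definition christoffel :: "(real^'n::finite \<Rightarrow> real^'n^'n) \<Rightarrow> real^'n \<Rightarrow> 'n \<Rightarrow> 'n \<Rightarrow> 'n \<Rightarrow> real" where
  "christoffel g x a b c = (1/2) * (\<Sum>e\<in>UNIV. ginv g x $ a $ e *
      (pd b (\<lambda>y. g y $ e $ c) x + pd c (\<lambda>y. g y $ e $ b) x - pd e (\<lambda>y. g y $ b $ c) x))"

definition klists :: "nat \<Rightarrow> ('n::finite) list set" where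
  "klists k = {as. length as = k}"

text \<open>Raising all indices of a covariant tensor field T (components T x [a1,...,ak]).\<close>
definition raise :: "(real^'n::finite \<Rightarrow> real^'n^'n) \<Rightarrow> (real^'n \<Rightarrow> 'n list \<Rightarrow> real)
    \<Rightarrow> real^'n \<Rightarrow> 'n list \<Rightarrow> real" where
  "raise g T x as = (\<Sum>bs\<in>klists (length as).
      (\<Prod>j<length as. ginv g x $ (as ! j) $ (bs ! j)) * T x bs)"

text \<open>Covariant divergence nabla_a M^{a b2 ... bk} of a contravariant tensor field M.\<close>
definition cov_div :: "(real^'n::finite \<Rightarrow> real^'n^'n) \<Rightarrow> (real^'n \<Rightarrow> 'n list \<Rightarrow> real)
    \<Rightarrow> real^'n \<Rightarrow> 'n list \<Rightarrow> real" where
  "cov_div g M x bs = (\<Sum>a\<in>UNIV. pd a (\<lambda>y. M y (a # bs)) x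
      + (\<Sum>j<length (a # bs). \<Sum>e\<in>UNIV. christoffel g x ((a # bs) ! j) a e * M x ((a # bs)[j := e])))"

text \<open>The deformation: leaves are the level sets {x. \<forall>i<k. Phi i x = lambda_i}.\<close>
definition tangent_vec :: "(nat \<Rightarrow> real^'n::finite \<Rightarrow> real) \<Rightarrow> nat \<Rightarrow> real^'n \<Rightarrow> real^'n \<Rightarrow> bool" where
  "tangent_vec \<Phi> k x t = (\<forall>i<k. grad (\<Phi> i) x \<bullet> t = 0)"

definition normal_space :: "(real^'n::finite \<Rightarrow> real^'n^'n) \<Rightarrow> (nat \<Rightarrow> real^'n \<Rightarrow> real)
    \<Rightarrow> nat \<Rightarrow> real^'n \<Rightarrow> (real^'n) set" where
  "normal_space g \<Phi> k x = span ((\<lambda>i. ginv g x *v grad (\<Phi> i) x) ` {..<k})"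

definition non_null_at :: "(real^'n::finite \<Rightarrow> real^'n^'n) \<Rightarrow> (nat \<Rightarrow> real^'n \<Rightarrow> real)
    \<Rightarrow> nat \<Rightarrow> real^'n \<Rightarrow> bool" where
  "non_null_at g \<Phi> k x = (\<forall>v\<in>normal_space g \<Phi> k x.
      (\<forall>w\<in>normal_space g \<Phi> k x. gdot g x v w = 0) \<longrightarrow> v = 0)"

definition normal_minus_signs :: "(real^'n::finite \<Rightarrow> real^'n^'n) \<Rightarrow> (nat \<Rightarrow> real^'n \<Rightarrow> real)
    \<Rightarrow> nat \<Rightarrow> real^'n \<Rightarrow> nat \<Rightarrow> bool" where
  "normal_minus_signs g \<Phi> k x s = (\<exists>e :: nat \<Rightarrow> real^'n.
      (\<forall>i<k. e i \<in> normal_space g \<Phi> k x) \<and>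
      (\<forall>i<k. \<forall>j<k. i \<noteq> j \<longrightarrow> gdot g x (e i) (e j) = 0) \<and>
      (\<forall>i<k. gdot g x (e i) (e i) = 1 \<or> gdot g x (e i) (e i) = -1) \<and>
      s = card {i. i < k \<and> gdot g x (e i) (e i) = -1})"

text \<open>The normal distribution is locally integrable: near every point it is the
tangent distribution of the level sets of d-k smooth functions with independent
differentials (i.e. it has local integral manifolds).\<close>
definition normal_integrable :: "(real^'n::finite \<Rightarrow> real^'n^'n) \<Rightarrow> (nat \<Rightarrow> real^'n \<Rightarrow> real)
    \<Rightarrow> nat \<Rightarrow> (real^'n) set \<Rightarrow> bool" where
  "normal_integrable g \<Phi> k U = (\<forall>x\<in>U. \<exists>V (\<psi> :: nat \<Rightarrow> real^'n \<Rightarrow> real).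
      open V \<and> x \<in> V \<and> V \<subseteq> U \<and>
      (\<forall>j < CARD('n) - k. smooth_on V (\<psi> j)) \<and>
      (\<forall>y\<in>V. lin_indep_fam (\<lambda>j. grad (\<psi> j) y) (CARD('n) - k) \<and>
         {v. \<forall>j < CARD('n) - k. grad (\<psi> j) y \<bullet> v = 0} = normal_space g \<Phi> k y))"

end

theory Submission
  imports Defs
begin

text \<open>Near a point \<open>x\<close>, integrability of the normal distribution gives functions \<open>\<psi>\<^sub>i\<close>
whose common level sets have the normal spaces as tangent spaces. The lowered tangent vector
\<open>g t\<close> annihilates the normal space, so it is a combination of the gradients \<open>d\<psi>\<^sub>i\<close>, and it
suffices to contract the divergence of \<open>N\<close> with each \<open>d\<psi>\<^sub>i\<close>. Since \<open>g\<^sup>-\<^sup>1 d\<psi>\<close> is tangent to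
the leaves, \<open>d\<psi>\<close> contracted into \<open>N\<close> vanishes identically near \<open>x\<close>, hence so does the
divergence of this contraction; by the Leibniz rule what remains is the Hessian of \<open>\<psi>\<close>
contracted into two slots of \<open>N\<close>. It vanishes because the Hessian is symmetric (Schwarz's
theorem, and the symmetry of the Christoffel symbols in their lower indices) while \<open>N\<close> is
antisymmetric.\<close>

section \<open>Partial derivatives\<close>

lemma smooth_on_differentiable_at:
  assumes "open U" "x \<in> U" "smooth_on U f"
  shows "f differentiable (at x)"
  using assms Ck.simps(2)[of 0 U f] differentiable_on_eq_differentiable_at
  unfolding smooth_on_def by blast

lemma pd_has_derivative: "(f has_derivative f') (at x) \<Longrightarrow> pd i f x = f' (axis i 1)"
  unfolding pd_def using frechet_derivative_at by metis

lemma pd_cong_open: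
  assumes "open V" "x \<in> V" "\<And>y. y \<in> V \<Longrightarrow> f y = h y"
  shows "pd i f x = pd i h x"
proof -
  have "(f has_derivative D) (at x) \<longleftrightarrow> (h has_derivative D) (at x)" for D
    using has_derivative_transform_within_open[OF _ assms(1,2)] assms(3) by metis
  then show ?thesis
    unfolding pd_def frechet_derivative_def by simp
qed

lemma pd_const: "pd i (\<lambda>y. c) x = 0"
  by (simp add: pd_def)

lemma pd_mult:
  assumes "f differentiable (at x)" "g differentiable (at x)"
  shows "pd i (\<lambda>y. f y * g y) x = pd i f x * g x + f x * pd i g x"
proof -
  have "((\<lambda>y. f y * g y) has_derivative
      (\<lambda>h. f x * frechet_derivative g (at x) h + frechet_derivative f (at x) h * g x)) (at x)"
    using assms by (intro has_derivative_mult) (auto simp: frechet_derivative_works)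
  from pd_has_derivative[OF this, of i] show ?thesis by (simp add: pd_def)
qed

lemma pd_sum:
  fixes f :: "'s \<Rightarrow> real^'n::finite \<Rightarrow> real"
  assumes "finite S" "\<And>s. s \<in> S \<Longrightarrow> f s differentiable (at x)"
  shows "pd i (\<lambda>y. \<Sum>s\<in>S. f s y) x = (\<Sum>s\<in>S. pd i (f s) x)"
proof -
  have "((\<lambda>y. \<Sum>s\<in>S. f s y) has_derivative (\<lambda>h. \<Sum>s\<in>S. frechet_derivative (f s) (at x) h)) (at x)"
    using assms by (intro has_derivative_sum) (auto simp: frechet_derivative_works)
  from pd_has_derivative[OF this, of i] show ?thesis by (simp add: pd_def)
qed

lemma pd_sum_mult_vanishing:
  fixes f g :: "'b \<Rightarrow> real^'n::finite \<Rightarrow> real"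
  assumes V: "open V" "x \<in> V" and B: "finite B"
    and f: "\<And>b. b \<in> B \<Longrightarrow> f b differentiable (at x)"
    and g: "\<And>b. b \<in> B \<Longrightarrow> g b differentiable (at x)"
    and vanish: "\<And>y. y \<in> V \<Longrightarrow> (\<Sum>b\<in>B. f b y * g b y) = 0"
  shows "(\<Sum>b\<in>B. f b x * pd a (g b) x) = - (\<Sum>b\<in>B. pd a (f b) x * g b x)"
proof -
  have "0 = pd a (\<lambda>y. 0) x"
    by (rule pd_const[symmetric])
  also have "\<dots> = pd a (\<lambda>y. \<Sum>b\<in>B. f b y * g b y) x"
    by (rule pd_cong_open[OF V]) (simp add: vanish)
  also have "\<dots> = (\<Sum>b\<in>B. pd a (\<lambda>y. f b y * g b y) x)"
    by (rule pd_sum[OF B]) (use f g in \<open>auto intro: differentiable_mult\<close>)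
  also have "\<dots> = (\<Sum>b\<in>B. pd a (f b) x * g b x + f b x * pd a (g b) x)"
    by (rule sum.cong[OF refl]) (use f g in \<open>auto intro: pd_mult\<close>)
  finally show ?thesis
    by (simp add: sum.distrib eq_neg_iff_add_eq_0 add.commute)
qed

lemma differentiable_prod:
  fixes f :: "'i \<Rightarrow> 'a::real_normed_vector \<Rightarrow> real"
  assumes "\<And>i. i \<in> I \<Longrightarrow> f i differentiable (at x)"
  shows "(\<lambda>y. \<Prod>i\<in>I. f i y) differentiable (at x)"
proof -
  from assms obtain f' where "\<And>i. i \<in> I \<Longrightarrow> (f i has_derivative f' i) (at x)"
    unfolding differentiable_def by metis
  then show ?thesis
    unfolding differentiable_def using has_derivative_prod by blast
qed

lemma has_real_derivative_along_line:
  fixes F :: "real^'n::finite \<Rightarrow> real"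
  assumes "F differentiable (at (y + s *\<^sub>R u))"
  shows "((\<lambda>s. F (y + s *\<^sub>R u)) has_real_derivative frechet_derivative F (at (y + s *\<^sub>R u)) u) (at s)"
proof -
  let ?F' = "frechet_derivative F (at (y + s *\<^sub>R u))"
  have F': "(F has_derivative ?F') (at (y + s *\<^sub>R u))"
    using assms frechet_derivative_works by blast
  have line: "((\<lambda>s. y + s *\<^sub>R u) has_derivative (\<lambda>h. h *\<^sub>R u)) (at s)"
    by (auto intro!: derivative_eq_intros)
  have "((\<lambda>s. F (y + s *\<^sub>R u)) has_derivative (\<lambda>h. ?F' (h *\<^sub>R u))) (at s)"
    using has_derivative_compose[OF line F'] by (simp add: o_def)
  moreover have "(\<lambda>h. ?F' (h *\<^sub>R u)) = (\<lambda>h. ?F' u * h)"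
    using has_derivative_linear[OF F'] by (auto simp: linear_scale)
  ultimately show ?thesis
    by (simp add: has_field_derivative_def)
qed

lemma second_difference_mean_value:
  fixes f :: "real^'n::finite \<Rightarrow> real"
  assumes h: "0 < h"
    and square: "\<And>s t. 0 \<le> s \<Longrightarrow> s \<le> h \<Longrightarrow> 0 \<le> t \<Longrightarrow> t \<le> h \<Longrightarrow>
                  x + s *\<^sub>R axis a 1 + t *\<^sub>R axis b 1 \<in> V"
    and f_diff: "\<forall>y\<in>V. f differentiable (at y)"
    and pd_diff: "\<forall>y\<in>V. pd a f differentiable (at y)"
  obtains \<xi> \<eta> where "0 < \<xi>" "\<xi> < h" "0 < \<eta>" "\<eta> < h"
    "f (x + h *\<^sub>R axis a 1 + h *\<^sub>R axis b 1) - f (x + h *\<^sub>R axis a 1) - f (x + h *\<^sub>R axis b 1) + f x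
       = h * h * pd b (pd a f) (x + \<xi> *\<^sub>R axis a 1 + \<eta> *\<^sub>R axis b 1)"
proof -
  define u where "u = (axis a 1 :: real^'n)"
  define v where "v = (axis b 1 :: real^'n)"
  define \<phi> where "\<phi> s = f ((x + h *\<^sub>R v) + s *\<^sub>R u) - f (x + s *\<^sub>R u)" for s
  have "DERIV \<phi> s :> pd a f ((x + h *\<^sub>R v) + s *\<^sub>R u) - pd a f (x + s *\<^sub>R u)"
    if "0 \<le> s" "s \<le> h" for s
  proof -
    have "(x + h *\<^sub>R v) + s *\<^sub>R u \<in> V" "x + s *\<^sub>R u \<in> V"
      using square[of s h] square[of s 0] that h by (simp_all add: u_def v_def add_ac)
    then show ?thesis
      unfolding \<phi>_def pd_def u_def
      by (intro DERIV_diff has_real_derivative_along_line) (use f_diff u_def in auto)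
  qed
  from MVT2[OF h this] obtain \<xi> where \<xi>: "0 < \<xi>" "\<xi> < h"
    "\<phi> h - \<phi> 0 = h * (pd a f ((x + h *\<^sub>R v) + \<xi> *\<^sub>R u) - pd a f (x + \<xi> *\<^sub>R u))"
    by auto
  define \<omega> where "\<omega> t = pd a f ((x + \<xi> *\<^sub>R u) + t *\<^sub>R v)" for t
  have "DERIV \<omega> t :> pd b (pd a f) ((x + \<xi> *\<^sub>R u) + t *\<^sub>R v)" if "0 \<le> t" "t \<le> h" for t
  proof -
    have "(x + \<xi> *\<^sub>R u) + t *\<^sub>R v \<in> V"
      using square[of \<xi> t] that \<xi> by (simp add: u_def v_def)
    then show ?thesis
      unfolding \<omega>_def pd_def[of b] v_def
      by (intro has_real_derivative_along_line) (use pd_diff v_def in auto)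
  qed
  from MVT2[OF h this] obtain \<eta> where \<eta>: "0 < \<eta>" "\<eta> < h"
    "\<omega> h - \<omega> 0 = h * pd b (pd a f) ((x + \<xi> *\<^sub>R u) + \<eta> *\<^sub>R v)"
    by auto
  have "f (x + h *\<^sub>R u + h *\<^sub>R v) - f (x + h *\<^sub>R u) - f (x + h *\<^sub>R v) + f x = \<phi> h - \<phi> 0"
    unfolding \<phi>_def by (simp add: add_ac)
  also have "\<dots> = h * (\<omega> h - \<omega> 0)"
    using \<xi>(3) unfolding \<omega>_def by (simp add: add_ac)
  also have "\<dots> = h * h * pd b (pd a f) (x + \<xi> *\<^sub>R u + \<eta> *\<^sub>R v)"
    using \<eta>(3) by simp
  finally have "f (x + h *\<^sub>R axis a 1 + h *\<^sub>R axis b 1) - f (x + h *\<^sub>R axis a 1) - f (x + h *\<^sub>R axis b 1) + f x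
      = h * h * pd b (pd a f) (x + \<xi> *\<^sub>R axis a 1 + \<eta> *\<^sub>R axis b 1)"
    unfolding u_def v_def .
  with \<xi>(1,2) \<eta>(1,2) show ?thesis
    by (rule that)
qed

lemma dist_add_axis_le:
  fixes x :: "real^'n::finite"
  assumes "0 \<le> s" "0 \<le> t"
  shows "dist (x + s *\<^sub>R axis i 1 + t *\<^sub>R axis j 1) x \<le> s + t"
proof -
  have "dist (x + s *\<^sub>R axis i 1 + t *\<^sub>R axis j 1) x = norm (s *\<^sub>R axis i 1 + t *\<^sub>R axis j 1 :: real^'n)"
    by (simp add: dist_norm)
  also have "\<dots> \<le> s + t"
    using norm_triangle_ineq[of "s *\<^sub>R axis i 1 :: real^'n" "t *\<^sub>R axis j 1"] assms by simp
  finally show ?thesis .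
qed

lemma mixed_pd_agree_nearby:
  fixes f :: "real^'n::finite \<Rightarrow> real"
  assumes V: "open V" "x \<in> V" and f: "Ck 2 V f" and r: "r > 0"
  obtains p q where "dist p x < r" "dist q x < r" "pd b (pd a f) p = pd a (pd b f) q"
proof -
  have "f differentiable_on V" "\<forall>i. pd i f differentiable_on V"
    using f by (simp_all add: numeral_2_eq_2)
  then have f_diff: "\<forall>y\<in>V. f differentiable (at y)" and pd_diff: "\<forall>i. \<forall>y\<in>V. pd i f differentiable (at y)"
    using V(1) differentiable_on_eq_differentiable_at by blast+
  obtain r' where r': "r' > 0" "ball x r' \<subseteq> V"
    using V open_contains_ball by blast
  define h where "h = min r r' / 4"
  have h: "h > 0"
    using r r' by (simp add: h_def)
  have close: "dist (x + s *\<^sub>R axis i 1 + t *\<^sub>R axis j 1) x < min r r'"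
    if "0 \<le> s" "s \<le> h" "0 \<le> t" "t \<le> h" for s t i j
    using dist_add_axis_le[OF that(1,3), of x i j] that h unfolding h_def by linarith
  have square: "x + s *\<^sub>R axis i 1 + t *\<^sub>R axis j 1 \<in> V"
    if "0 \<le> s" "s \<le> h" "0 \<le> t" "t \<le> h" for s t i j
    using close[OF that, of i j] r' by (auto simp: dist_commute)
  obtain \<xi> \<eta> where p: "0 < \<xi>" "\<xi> < h" "0 < \<eta>" "\<eta> < h"
    "f (x + h *\<^sub>R axis a 1 + h *\<^sub>R axis b 1) - f (x + h *\<^sub>R axis a 1) - f (x + h *\<^sub>R axis b 1) + f x
       = h * h * pd b (pd a f) (x + \<xi> *\<^sub>R axis a 1 + \<eta> *\<^sub>R axis b 1)"
    using second_difference_mean_value[OF h square f_diff] pd_diff by blast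
  obtain \<xi>' \<eta>' where q: "0 < \<xi>'" "\<xi>' < h" "0 < \<eta>'" "\<eta>' < h"
    "f (x + h *\<^sub>R axis b 1 + h *\<^sub>R axis a 1) - f (x + h *\<^sub>R axis b 1) - f (x + h *\<^sub>R axis a 1) + f x
       = h * h * pd a (pd b f) (x + \<xi>' *\<^sub>R axis b 1 + \<eta>' *\<^sub>R axis a 1)"
    using second_difference_mean_value[OF h square f_diff] pd_diff by blast
  have swap: "x + h *\<^sub>R axis b 1 + h *\<^sub>R axis a 1 = x + h *\<^sub>R axis a 1 + h *\<^sub>R (axis b 1 :: real^'n)"
    by (simp add: add_ac)
  have "h * h * pd b (pd a f) (x + \<xi> *\<^sub>R axis a 1 + \<eta> *\<^sub>R axis b 1)
      = h * h * pd a (pd b f) (x + \<xi>' *\<^sub>R axis b 1 + \<eta>' *\<^sub>R axis a 1)"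
    using p(5) q(5)[unfolded swap] by linarith
  then have eq: "pd b (pd a f) (x + \<xi> *\<^sub>R axis a 1 + \<eta> *\<^sub>R axis b 1)
      = pd a (pd b f) (x + \<xi>' *\<^sub>R axis b 1 + \<eta>' *\<^sub>R axis a 1)"
    using h by simp
  have "dist (x + \<xi> *\<^sub>R axis a 1 + \<eta> *\<^sub>R axis b 1) x < r"
    "dist (x + \<xi>' *\<^sub>R axis b 1 + \<eta>' *\<^sub>R axis a 1) x < r"
    using close[of \<xi> \<eta> a b] close[of \<xi>' \<eta>' b a] p q by auto
  from that[OF this eq] show ?thesis .
qed

lemma pd_commute:
  fixes f :: "real^'n::finite \<Rightarrow> real"
  assumes "open V" "x \<in> V" "Ck 2 V f"
  shows "pd b (pd a f) x = pd a (pd b f) x"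
proof (rule ccontr)
  let ?A = "pd b (pd a f)" and ?B = "pd a (pd b f)"
  assume "?A x \<noteq> ?B x"
  define c where "c = \<bar>?A x - ?B x\<bar> / 2"
  have c: "c > 0"
    using \<open>?A x \<noteq> ?B x\<close> by (simp add: c_def)
  have "\<forall>i j. continuous_on V (pd j (pd i f))"
    using assms(3) by (simp add: numeral_2_eq_2)
  then have "isCont ?A x" "isCont ?B x"
    using assms(1,2) continuous_on_eq_continuous_at by blast+
  then obtain d1 d2 where d: "d1 > 0" "d2 > 0"
    "\<forall>y. dist y x < d1 \<longrightarrow> dist (?A y) (?A x) < c"
    "\<forall>y. dist y x < d2 \<longrightarrow> dist (?B y) (?B x) < c"
    using c unfolding continuous_at_eps_delta by blast
  obtain p q where "dist p x < min d1 d2" "dist q x < min d1 d2" "?A p = ?B q"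
    by (rule mixed_pd_agree_nearby[OF assms, of "min d1 d2"]) (use d in auto)
  then have "\<bar>?A p - ?A x\<bar> < c" "\<bar>?A p - ?B x\<bar> < c"
    using d(3,4) by (auto simp: dist_real_def)
  then show False
    unfolding c_def by (simp add: abs_if split: if_splits)
qed

section \<open>Linear algebra\<close>

lemma invertible_matrix_inv:
  fixes A :: "'a::semiring_1^'n^'m"
  assumes "invertible A"
  shows "A ** matrix_inv A = mat 1" "matrix_inv A ** A = mat 1"
  using someI_ex[OF assms[unfolded invertible_def]] unfolding matrix_inv_def by simp_all

lemma lorentzian_at_det_nonzero:
  fixes g :: "real^'n::finite \<Rightarrow> real^'n^'n"
  assumes "lorentzian_at g x"
  shows "det (g x) \<noteq> 0"
proof -
  obtain P :: "real^'n^'n" and i0 where P: "invertible P"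
    "transpose P ** g x ** P = (\<chi> i j. if i = j then (if i = i0 then -1 else 1) else 0)"
    using assms unfolding lorentzian_at_def by blast
  have "det (transpose P ** g x ** P) = (\<Prod>i\<in>UNIV. if i = i0 then -1 else 1 :: real)"
    unfolding P(2) by (subst det_diagonal) auto
  also have "\<dots> \<noteq> 0"
    by simp
  finally show ?thesis
    by (simp add: det_mul)
qed

lemma matrix_inv_cramer:
  fixes A :: "real^'n::finite^'n"
  assumes "det A \<noteq> 0"
  shows "matrix_inv A $ i $ c = det (\<chi> r s. if s = i then (if r = c then 1 else 0) else A $ r $ s) / det A"
proof -
  have axis_nth: "(axis c 1 :: real^'n) $ r = (if r = c then 1 else 0)" for r
    by (simp add: axis_def)
  have "invertible A"
    using assms invertible_det_nz by blast
  then have "A *v (matrix_inv A *v axis c 1) = axis c 1"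
    by (simp add: matrix_vector_mul_assoc invertible_matrix_inv)
  then have "(matrix_inv A *v axis c 1) $ i = det (\<chi> r s. if s = i then axis c 1 $ r else A $ r $ s) / det A"
    using cramer[OF assms] by simp
  then show ?thesis
    unfolding matrix_vector_mult_basis column_def vec_lambda_beta axis_nth .
qed

lemma differentiable_det:
  fixes F :: "real^'m::finite \<Rightarrow> real^'n::finite^'n"
  assumes "\<And>r s. (\<lambda>y. F y $ r $ s) differentiable (at x)"
  shows "(\<lambda>y. det (F y)) differentiable (at x)"
  unfolding det_def
  by (intro differentiable_sum differentiable_mult differentiable_const differentiable_prod ballI)
     (auto simp: finite_permutations assms)

lemma differentiable_ginv:
  fixes g :: "real^'n::finite \<Rightarrow> real^'n^'n"
  assumes U: "open U" "x \<in> U"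
    and g_diff: "\<And>r s. (\<lambda>y. g y $ r $ s) differentiable (at x)"
    and det: "\<forall>y\<in>U. det (g y) \<noteq> 0"
  shows "(\<lambda>y. ginv g y $ i $ c) differentiable (at x)"
proof -
  \<comment> \<open>\<open>matrix_inv\<close> is defined by choice; Cramer's rule exhibits its entries as quotients of determinants.\<close>
  define cof where "cof y = det (\<chi> r s. if s = i then (if r = c then 1 else 0) else g y $ r $ s)" for y
  have "(\<lambda>y. (\<chi> r s. if s = i then (if r = c then 1 else 0) else g y $ r $ s) $ r $ s) differentiable (at x)"
    for r s
    using g_diff[of r s] by (cases "s = i") auto
  then have "(\<lambda>y. cof y / det (g y)) differentiable (at x)"
    unfolding cof_def using det U(2) g_diff
    by (intro differentiable_divide differentiable_det) auto
  then obtain D where "((\<lambda>y. cof y / det (g y)) has_derivative D) (at x)"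
    unfolding differentiable_def by blast
  moreover have "cof y / det (g y) = ginv g y $ i $ c" if "y \<in> U" for y
    unfolding cof_def ginv_def using matrix_inv_cramer[of "g y" i c] det that by simp
  ultimately have "((\<lambda>y. ginv g y $ i $ c) has_derivative D) (at x)"
    by (rule has_derivative_transform_within_open[OF _ U])
  then show ?thesis
    unfolding differentiable_def by blast
qed

lemma orthogonal_orthogonal_imp_in_span:
  fixes v :: "'a::euclidean_space"
  assumes "\<And>z. (\<forall>w\<in>W. w \<bullet> z = 0) \<Longrightarrow> v \<bullet> z = 0"
  shows "v \<in> span W"
proof -
  obtain y z where y: "y \<in> span W" and z: "\<And>w. w \<in> span W \<Longrightarrow> orthogonal z w" and v: "v = y + z"
    using orthogonal_subspace_decomp_exists[of W v] by blast
  have "\<forall>w\<in>W. w \<bullet> z = 0"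
    using z span_base unfolding orthogonal_def by (metis inner_commute)
  then have "v \<bullet> z = 0"
    by (rule assms)
  moreover have "y \<bullet> z = 0"
    using z[OF y] unfolding orthogonal_def by (simp add: inner_commute)
  ultimately have "z = 0"
    using v by (simp add: inner_add_left)
  then show ?thesis
    using v y by simp
qed

section \<open>Contraction and raising of indices\<close>

text \<open>\<open>contract w T cs p\<close> puts \<open>w\<close> into slot \<open>p\<close> of \<open>T\<close>, the other indices being those of \<open>cs\<close>;
the entry \<open>cs ! p\<close> is ignored.\<close>

definition contract :: "real^'n::finite \<Rightarrow> ('n list \<Rightarrow> real) \<Rightarrow> 'n list \<Rightarrow> nat \<Rightarrow> real" where
  "contract w T cs p = (\<Sum>b\<in>UNIV. w $ b * T (cs[p := b]))"

lemma contract_add: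
  "contract w (\<lambda>cs. S cs + T cs) cs p = contract w S cs p + contract w T cs p"
  unfolding contract_def by (simp add: distrib_left sum.distrib)

lemma contract_span_eq_0:
  assumes "v \<in> span W" "\<And>w. w \<in> W \<Longrightarrow> contract w T cs p = 0"
  shows "contract v T cs p = 0"
proof -
  have "subspace {w. contract w T cs p = 0}"
    unfolding subspace_def contract_def
    by (auto simp: algebra_simps sum.distrib sum_distrib_left[symmetric])
  then show ?thesis
    using span_induct[OF assms(1), of "\<lambda>w. contract w T cs p = 0"] assms(2) by simp
qed

lemma finite_klists: "finite (klists k :: 'n::finite list set)"
  using finite_lists_length_eq[of "UNIV :: 'n set" k] by (simp add: klists_def)

lemma differentiable_raise:
  fixes g :: "real^'n::finite \<Rightarrow> real^'n^'n"
  assumes "\<And>i c. (\<lambda>y. ginv g y $ i $ c) differentiable (at x)"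
    and "\<And>bs. (\<lambda>y. T y bs) differentiable (at x)"
  shows "(\<lambda>y. raise g T y as) differentiable (at x)"
  unfolding raise_def
  by (intro differentiable_sum differentiable_mult differentiable_prod ballI)
     (auto simp: finite_klists assms)

lemma sum_klists_eq_0_fibrewise:
  fixes H :: "'n::finite list \<Rightarrow> real"
  assumes p: "p < k"
    and fibre: "\<And>y. length y = k \<Longrightarrow> (\<Sum>c\<in>UNIV. H (y[p := c])) = 0"
  shows "(\<Sum>bs\<in>klists k. H bs) = 0"
proof -
  define c0 :: 'n where "c0 = undefined"
  define \<pi> where "\<pi> bs = bs[p := c0]" for bs :: "'n list"
  have "(\<Sum>bs\<in>klists k. H bs) = (\<Sum>y\<in>\<pi> ` klists k. \<Sum>bs\<in>{bs \<in> klists k. \<pi> bs = y}. H bs)"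
    by (rule sum.image_gen[OF finite_klists])
  also have "\<dots> = 0"
  proof (rule sum.neutral, rule ballI)
    fix y assume "y \<in> \<pi> ` klists k"
    then have y: "length y = k" "y[p := c0] = y"
      using p by (auto simp: \<pi>_def klists_def)
    have "{bs \<in> klists k. \<pi> bs = y} = (\<lambda>c. y[p := c]) ` UNIV"
    proof (intro set_eqI iffI)
      fix bs assume "bs \<in> {bs \<in> klists k. \<pi> bs = y}"
      then have "bs = y[p := bs ! p]"
        by (auto simp: \<pi>_def)
      then show "bs \<in> (\<lambda>c. y[p := c]) ` UNIV"
        by blast
    qed (use y in \<open>auto simp: \<pi>_def klists_def\<close>)
    moreover have "inj (\<lambda>c. y[p := c])"
      by (rule injI) (metis y(1) p nth_list_update_eq)
    ultimately show "(\<Sum>bs\<in>{bs \<in> klists k. \<pi> bs = y}. H bs) = 0"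
      using fibre[OF y(1)] by (simp add: sum.reindex o_def)
  qed
  finally show ?thesis .
qed

lemma contract_raise_eq_0:
  fixes g :: "real^'n::finite \<Rightarrow> real^'n^'n" and T :: "real^'n \<Rightarrow> 'n list \<Rightarrow> real"
  assumes p: "p < length as"
    and T: "\<And>cs. length cs = length as \<Longrightarrow> contract (w v* ginv g x) (T x) cs p = 0"
  shows "contract w (raise g T x) as p = 0"
proof -
  define k where "k = length as"
  define G where "G = ginv g x"
  define Q where "Q bs = (\<Prod>m\<in>{..<k} - {p}. G $ (as ! m) $ (bs ! m))" for bs
  have prod_split: "(\<Prod>m<k. G $ (as[p := b] ! m) $ (bs ! m)) = G $ b $ (bs ! p) * Q bs" for b bs
  proof -
    have "(\<Prod>m<k. G $ (as[p := b] ! m) $ (bs ! m))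
        = G $ (as[p := b] ! p) $ (bs ! p) * (\<Prod>m\<in>{..<k} - {p}. G $ (as[p := b] ! m) $ (bs ! m))"
      using p by (subst prod.remove[of _ p]) (auto simp: k_def)
    also have "(\<Prod>m\<in>{..<k} - {p}. G $ (as[p := b] ! m) $ (bs ! m)) = Q bs"
      unfolding Q_def by (rule prod.cong) auto
    finally show ?thesis
      using p by (simp add: k_def)
  qed
  have "contract w (raise g T x) as p
      = (\<Sum>b\<in>UNIV. \<Sum>bs\<in>klists k. w $ b * (G $ b $ (bs ! p) * Q bs * T x bs))"
    unfolding contract_def raise_def length_list_update k_def[symmetric] G_def[symmetric]
    by (simp add: prod_split sum_distrib_left mult.assoc)
  also have "\<dots> = (\<Sum>bs\<in>klists k. \<Sum>b\<in>UNIV. w $ b * (G $ b $ (bs ! p) * Q bs * T x bs))"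
    by (rule sum.swap)
  also have "\<dots> = (\<Sum>bs\<in>klists k. (w v* G) $ (bs ! p) * Q bs * T x bs)"
    by (simp add: vector_matrix_mult_def sum_distrib_left sum_distrib_right mult_ac)
  also have "\<dots> = 0"
  proof (rule sum_klists_eq_0_fibrewise)
    fix y :: "'n list" assume y: "length y = k"
    have "Q (y[p := c]) = Q y" for c
      unfolding Q_def by (rule prod.cong) auto
    then have "(\<Sum>c\<in>UNIV. (w v* G) $ (y[p := c] ! p) * Q (y[p := c]) * T x (y[p := c]))
        = Q y * contract (w v* G) (T x) y p"
      using y p by (simp add: contract_def sum_distrib_left mult_ac k_def)
    then show "(\<Sum>c\<in>UNIV. (w v* G) $ (y[p := c] ! p) * Q (y[p := c]) * T x (y[p := c])) = 0"
      using T y by (simp add: k_def G_def)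
  qed (use p k_def in simp)
  finally show ?thesis .
qed

lemma raise_swap:
  fixes g :: "real^'n::finite \<Rightarrow> real^'n^'n" and T :: "real^'n \<Rightarrow> 'n list \<Rightarrow> real"
  assumes ij: "i < j" "j < length as"
    and T: "\<And>cs. length cs = length as \<Longrightarrow> T x (cs[i := cs ! j, j := cs ! i]) = - T x cs"
  shows "raise g T x (as[i := as ! j, j := as ! i]) = - raise g T x as"
proof -
  define k where "k = length as"
  define swap :: "'n list \<Rightarrow> 'n list" where "swap l = l[i := l ! j, j := l ! i]" for l
  define \<sigma> where "\<sigma> m = (if m = i then j else if m = j then i else m)" for m
  have swap_nth: "swap l ! m = l ! \<sigma> m" if "length l = k" "m < k" for l m
    using that ij by (auto simp: swap_def \<sigma>_def nth_list_update k_def)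
  have swap_swap: "swap (swap l) = l" if "l \<in> klists k" for l
    using that ij by (auto simp: swap_def klists_def k_def list_eq_iff_nth_eq nth_list_update)
  have swap_klists: "swap l \<in> klists k" if "l \<in> klists k" for l
    using that by (simp add: swap_def klists_def)
  have "length (swap as) = k"
    by (simp add: swap_def k_def)
  then have "raise g T x (swap as)
      = (\<Sum>bs\<in>klists k. (\<Prod>m<k. ginv g x $ (swap as ! m) $ (swap bs ! m)) * T x (swap bs))"
    unfolding raise_def
    by (intro sum.reindex_bij_witness[of _ swap swap]) (auto simp: swap_swap swap_klists)
  also have "\<dots> = (\<Sum>bs\<in>klists k. - ((\<Prod>m<k. ginv g x $ (as ! m) $ (bs ! m)) * T x bs))"
  proof (rule sum.cong[OF refl])
    fix bs :: "'n list" assume "bs \<in> klists k"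
    then have bs: "length bs = k"
      by (simp add: klists_def)
    have "(\<Prod>m<k. ginv g x $ (swap as ! m) $ (swap bs ! m))
        = (\<Prod>m<k. ginv g x $ (as ! \<sigma> m) $ (bs ! \<sigma> m))"
      using bs by (simp add: swap_nth k_def)
    also have "\<dots> = (\<Prod>m<k. ginv g x $ (as ! m) $ (bs ! m))"
      by (rule prod.reindex_bij_witness[of _ \<sigma> \<sigma>]) (use ij in \<open>auto simp: \<sigma>_def k_def\<close>)
    finally show "(\<Prod>m<k. ginv g x $ (swap as ! m) $ (swap bs ! m)) * T x (swap bs)
        = - ((\<Prod>m<k. ginv g x $ (as ! m) $ (bs ! m)) * T x bs)"
      using T bs by (simp add: swap_def k_def)
  qed
  also have "\<dots> = - raise g T x as"
    by (simp add: raise_def k_def sum_negf)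
  finally show ?thesis
    by (simp add: swap_def)
qed

section \<open>Divergence of antisymmetric tensor fields\<close>

lemma sum_sym_antisym_eq_0:
  fixes H X :: "'a::finite \<Rightarrow> 'a \<Rightarrow> real"
  assumes "\<And>a b. H a b = H b a" "\<And>a b. X a b = - X b a"
  shows "(\<Sum>a\<in>UNIV. \<Sum>b\<in>UNIV. H a b * X a b) = 0"
proof -
  have "(\<Sum>a\<in>UNIV. \<Sum>b\<in>UNIV. H a b * X a b) = (\<Sum>b\<in>UNIV. \<Sum>a\<in>UNIV. H a b * X a b)"
    by (rule sum.swap)
  also have "\<dots> = (\<Sum>b\<in>UNIV. \<Sum>a\<in>UNIV. - (H b a * X b a))"
    by (intro sum.cong refl) (metis assms mult_minus_right)
  also have "\<dots> = - (\<Sum>b\<in>UNIV. \<Sum>a\<in>UNIV. H b a * X b a)"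
    by (simp add: sum_negf)
  finally show ?thesis
    by simp
qed

lemma contract_pd_divergence_eq_0:
  fixes M :: "real^'n::finite \<Rightarrow> 'n list \<Rightarrow> real"
  assumes V: "open V" "x \<in> V" and \<psi>: "Ck 2 V \<psi>"
    and M_diff: "\<And>as. (\<lambda>y. M y as) differentiable (at x)"
    and annihilates: "\<And>y cs. y \<in> V \<Longrightarrow> length cs = Suc (length bs) \<Longrightarrow>
                        contract (grad \<psi> y) (M y) cs (Suc j) = 0"
    and antisym: "\<And>a b. M x (a # bs[j := b]) = - M x (b # bs[j := a])"
    and j: "j < length bs"
  shows "contract (grad \<psi> x) (\<lambda>cs. \<Sum>a\<in>UNIV. pd a (\<lambda>y. M y (a # cs)) x) bs j = 0"
proof -
  have "\<forall>i. pd i \<psi> differentiable_on V"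
    using \<psi> by (simp add: numeral_2_eq_2)
  then have pd_\<psi>_diff: "pd b \<psi> differentiable (at x)" for b
    using V differentiable_on_eq_differentiable_at by blast
  have product_rule: "(\<Sum>b\<in>UNIV. pd b \<psi> x * pd a (\<lambda>y. M y (a # bs[j := b])) x)
      = - (\<Sum>b\<in>UNIV. pd a (pd b \<psi>) x * M x (a # bs[j := b]))" for a
    by (rule pd_sum_mult_vanishing[where f = "\<lambda>b. pd b \<psi>" and g = "\<lambda>b y. M y (a # bs[j := b])", OF V])
       (use pd_\<psi>_diff M_diff annihilates[of _ "a # bs"] j in \<open>auto simp: contract_def grad_def\<close>)
  have "contract (grad \<psi> x) (\<lambda>cs. \<Sum>a\<in>UNIV. pd a (\<lambda>y. M y (a # cs)) x) bs j
      = (\<Sum>b\<in>UNIV. \<Sum>a\<in>UNIV. pd b \<psi> x * pd a (\<lambda>y. M y (a # bs[j := b])) x)"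
    unfolding contract_def grad_def by (simp add: sum_distrib_left)
  also have "\<dots> = (\<Sum>a\<in>UNIV. \<Sum>b\<in>UNIV. pd b \<psi> x * pd a (\<lambda>y. M y (a # bs[j := b])) x)"
    by (rule sum.swap)
  also have "\<dots> = - (\<Sum>a\<in>UNIV. \<Sum>b\<in>UNIV. pd a (pd b \<psi>) x * M x (a # bs[j := b]))"
    by (simp add: product_rule sum_negf)
  also have "(\<Sum>a\<in>UNIV. \<Sum>b\<in>UNIV. pd a (pd b \<psi>) x * M x (a # bs[j := b])) = 0"
    by (rule sum_sym_antisym_eq_0[OF pd_commute[OF V \<psi>] antisym])
  finally show ?thesis
    by simp
qed

lemma contract_christoffel_slot_eq_0:
  fixes M :: "'n::finite list \<Rightarrow> real" and \<Gamma> :: "'n \<Rightarrow> 'n \<Rightarrow> 'n \<Rightarrow> real"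
  assumes annihilates: "\<And>cs. length cs = Suc (length bs) \<Longrightarrow> contract w M cs (Suc j) = 0"
    and antisym: "\<And>a b. M (a # bs[j := b]) = - M (b # bs[j := a])"
    and \<Gamma>_sym: "\<And>a b c. \<Gamma> a b c = \<Gamma> a c b"
    and j: "j < length bs"
  shows "(\<Sum>b\<in>UNIV. w $ b * (\<Sum>a\<in>UNIV. \<Sum>e\<in>UNIV.
           \<Gamma> ((a # bs[j := b]) ! m) a e * M ((a # bs[j := b])[m := e]))) = 0"
proof (cases "m = Suc j")
  case True
  have "(\<Sum>a\<in>UNIV. \<Sum>e\<in>UNIV. \<Gamma> ((a # bs[j := b]) ! m) a e * M ((a # bs[j := b])[m := e])) = 0" for b
  proof -
    have "(\<Sum>a\<in>UNIV. \<Sum>e\<in>UNIV. \<Gamma> ((a # bs[j := b]) ! m) a e * M ((a # bs[j := b])[m := e]))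
        = (\<Sum>a\<in>UNIV. \<Sum>e\<in>UNIV. \<Gamma> b a e * M (a # bs[j := e]))"
      using True j by simp
    also have "\<dots> = 0"
      by (rule sum_sym_antisym_eq_0) (use \<Gamma>_sym antisym in blast)+
    finally show ?thesis .
  qed
  then show ?thesis
    by simp
next
  case False
  have "(\<Sum>a\<in>UNIV. \<Sum>e\<in>UNIV. \<Gamma> ((a # bs[j := b]) ! m) a e * M ((a # bs[j := b])[m := e]))
      = (\<Sum>a\<in>UNIV. \<Sum>e\<in>UNIV. \<Gamma> ((a # bs) ! m) a e * M (((a # bs)[m := e])[Suc j := b]))" for b
    using False by (intro sum.cong refl) (cases m; auto simp: list_update_swap)
  then have "(\<Sum>b\<in>UNIV. w $ b * (\<Sum>a\<in>UNIV. \<Sum>e\<in>UNIV.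
           \<Gamma> ((a # bs[j := b]) ! m) a e * M ((a # bs[j := b])[m := e])))
      = (\<Sum>b\<in>UNIV. \<Sum>a\<in>UNIV. \<Sum>e\<in>UNIV. \<Gamma> ((a # bs) ! m) a e * (w $ b * M (((a # bs)[m := e])[Suc j := b])))"
    by (simp add: sum_distrib_left mult.left_commute)
  also have "\<dots> = (\<Sum>a\<in>UNIV. \<Sum>b\<in>UNIV. \<Sum>e\<in>UNIV. \<Gamma> ((a # bs) ! m) a e * (w $ b * M (((a # bs)[m := e])[Suc j := b])))"
    by (rule sum.swap)
  also have "\<dots> = (\<Sum>a\<in>UNIV. \<Sum>e\<in>UNIV. \<Sum>b\<in>UNIV. \<Gamma> ((a # bs) ! m) a e * (w $ b * M (((a # bs)[m := e])[Suc j := b])))"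
    by (rule sum.cong[OF refl], rule sum.swap)
  also have "\<dots> = (\<Sum>a\<in>UNIV. \<Sum>e\<in>UNIV. \<Gamma> ((a # bs) ! m) a e * contract w M ((a # bs)[m := e]) (Suc j))"
    by (simp add: contract_def sum_distrib_left)
  also have "\<dots> = 0"
  proof -
    have "contract w M ((a # bs)[m := e]) (Suc j) = 0" for a e
      by (rule annihilates) (simp only: length_list_update length_Cons)
    then show ?thesis
      by (simp only: mult_zero_right sum.neutral_const)
  qed
  finally show ?thesis .
qed

lemma contract_christoffel_divergence_eq_0:
  fixes M :: "'n::finite list \<Rightarrow> real" and \<Gamma> :: "'n \<Rightarrow> 'n \<Rightarrow> 'n \<Rightarrow> real"
  assumes annihilates: "\<And>cs. length cs = Suc (length bs) \<Longrightarrow> contract w M cs (Suc j) = 0"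
    and antisym: "\<And>a b. M (a # bs[j := b]) = - M (b # bs[j := a])"
    and \<Gamma>_sym: "\<And>a b c. \<Gamma> a b c = \<Gamma> a c b"
    and j: "j < length bs"
  shows "contract w (\<lambda>cs. \<Sum>a\<in>UNIV. \<Sum>m<length (a # cs). \<Sum>e\<in>UNIV.
           \<Gamma> ((a # cs) ! m) a e * M ((a # cs)[m := e])) bs j = 0"
proof -
  define n where "n = Suc (length bs)"
  have "contract w (\<lambda>cs. \<Sum>a\<in>UNIV. \<Sum>m<length (a # cs). \<Sum>e\<in>UNIV.
           \<Gamma> ((a # cs) ! m) a e * M ((a # cs)[m := e])) bs j
      = (\<Sum>b\<in>UNIV. \<Sum>a\<in>UNIV. \<Sum>m<n. w $ b * (\<Sum>e\<in>UNIV. \<Gamma> ((a # bs[j := b]) ! m) a e * M ((a # bs[j := b])[m := e])))"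
    by (simp only: contract_def n_def length_Cons length_list_update sum_distrib_left)
  also have "\<dots> = (\<Sum>b\<in>UNIV. \<Sum>m<n. \<Sum>a\<in>UNIV. w $ b * (\<Sum>e\<in>UNIV. \<Gamma> ((a # bs[j := b]) ! m) a e * M ((a # bs[j := b])[m := e])))"
    by (rule sum.cong[OF refl], rule sum.swap)
  also have "\<dots> = (\<Sum>m<n. \<Sum>b\<in>UNIV. w $ b * (\<Sum>a\<in>UNIV. \<Sum>e\<in>UNIV.
           \<Gamma> ((a # bs[j := b]) ! m) a e * M ((a # bs[j := b])[m := e])))"
    unfolding sum_distrib_left by (rule sum.swap)
  also have "\<dots> = 0"
    by (intro sum.neutral ballI contract_christoffel_slot_eq_0[where \<Gamma> = \<Gamma>, OF annihilates antisym \<Gamma>_sym j])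
  finally show ?thesis .
qed

lemma christoffel_sym:
  fixes g :: "real^'n::finite \<Rightarrow> real^'n^'n"
  assumes U: "open U" "x \<in> U" and sym: "\<forall>y\<in>U. transpose (g y) = g y"
  shows "christoffel g x a b c = christoffel g x a c b"
proof -
  have "g y $ b $ c = g y $ c $ b" if "y \<in> U" for y
  proof -
    have "transpose (g y) $ c $ b = g y $ c $ b"
      using sym that by simp
    then show ?thesis
      by (simp add: transpose_def)
  qed
  then have "pd e (\<lambda>y. g y $ b $ c) x = pd e (\<lambda>y. g y $ c $ b) x" for e
    by (rule pd_cong_open[OF U])
  then show ?thesis
    unfolding christoffel_def by (simp add: add.commute)
qed

lemma contract_cov_div_eq_0:
  fixes M :: "real^'n::finite \<Rightarrow> 'n list \<Rightarrow> real"
  assumes V: "open V" "x \<in> V" and \<psi>: "Ck 2 V \<psi>"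
    and M_diff: "\<And>as. (\<lambda>y. M y as) differentiable (at x)"
    and annihilates: "\<And>y cs. y \<in> V \<Longrightarrow> length cs = Suc (length bs) \<Longrightarrow>
                        contract (grad \<psi> y) (M y) cs (Suc j) = 0"
    and antisym: "\<And>a b. M x (a # bs[j := b]) = - M x (b # bs[j := a])"
    and \<Gamma>_sym: "\<And>a b c. christoffel g x a b c = christoffel g x a c b"
    and j: "j < length bs"
  shows "contract (grad \<psi> x) (cov_div g M x) bs j = 0"
proof -
  let ?P = "\<lambda>cs. \<Sum>a\<in>UNIV. pd a (\<lambda>y. M y (a # cs)) x"
  let ?C = "\<lambda>cs. \<Sum>a\<in>UNIV. \<Sum>m<length (a # cs). \<Sum>e\<in>UNIV.
              christoffel g x ((a # cs) ! m) a e * M x ((a # cs)[m := e])"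
  have "cov_div g M x = (\<lambda>cs. ?P cs + ?C cs)"
    by (simp add: cov_div_def fun_eq_iff sum.distrib)
  then have "contract (grad \<psi> x) (cov_div g M x) bs j = contract (grad \<psi> x) ?P bs j + contract (grad \<psi> x) ?C bs j"
    by (simp only: contract_add)
  also have "\<dots> = 0"
    using contract_pd_divergence_eq_0[OF V \<psi> M_diff annihilates antisym j]
      contract_christoffel_divergence_eq_0[where \<Gamma> = "christoffel g x", OF annihilates[OF V(2)] antisym \<Gamma>_sym j]
    by (simp only: add_0)
  finally show ?thesis .
qed

section \<open>Leaves of the deformation\<close>

lemma lowered_tangent_in_span:
  fixes g :: "real^'n::finite \<Rightarrow> real^'n^'n" and \<psi> :: "nat \<Rightarrow> real^'n \<Rightarrow> real"
  assumes inv: "invertible (g x)" and sym: "transpose (g x) = g x"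
    and t: "tangent_vec \<Phi> k x t"
    and normal: "{v. \<forall>i<m. grad (\<psi> i) x \<bullet> v = 0} = normal_space g \<Phi> k x"
  shows "g x *v t \<in> span ((\<lambda>i. grad (\<psi> i) x) ` {..<m})"
proof (rule orthogonal_orthogonal_imp_in_span)
  fix z assume "\<forall>w\<in>(\<lambda>i. grad (\<psi> i) x) ` {..<m}. w \<bullet> z = 0"
  then have z: "z \<in> normal_space g \<Phi> k x"
    using normal by auto
  have "(g x *v t) \<bullet> (ginv g x *v grad (\<Phi> l) x) = 0" if "l < k" for l
  proof -
    have "(g x *v t) \<bullet> (ginv g x *v grad (\<Phi> l) x) = t \<bullet> (g x *v (ginv g x *v grad (\<Phi> l) x))"
      using sym dot_lmul_matrix[of t "g x"] transpose_matrix_vector[of "g x" t] by simp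
    also have "\<dots> = t \<bullet> grad (\<Phi> l) x"
      using inv by (simp add: ginv_def matrix_vector_mul_assoc invertible_matrix_inv)
    finally show ?thesis
      using t that by (simp add: tangent_vec_def inner_commute)
  qed
  then have "normal_space g \<Phi> k x \<subseteq> {z. (g x *v t) \<bullet> z = 0}"
    unfolding normal_space_def by (intro span_minimal subspace_hyperplane) auto
  then show "(g x *v t) \<bullet> z = 0"
    using z by blast
qed

lemma contract_raise_normal_form_eq_0:
  fixes g :: "real^'n::finite \<Rightarrow> real^'n^'n" and N :: "real^'n \<Rightarrow> 'n list \<Rightarrow> real"
    and \<psi> :: "nat \<Rightarrow> real^'n \<Rightarrow> real"
  assumes normal: "\<forall>t. tangent_vec \<Phi> k y t \<longrightarrow>
                     (\<forall>as j. length as = k \<and> j < k \<longrightarrow> (\<Sum>a\<in>UNIV. t $ a * N y (as[j := a])) = 0)"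
    and level_sets: "{v. \<forall>i<m. grad (\<psi> i) y \<bullet> v = 0} = normal_space g \<Phi> k y"
    and i: "i < m" and cs: "length cs = k" "p < k"
  shows "contract (grad (\<psi> i) y) (raise g N y) cs p = 0"
proof -
  have "tangent_vec \<Phi> k y (grad (\<psi> i) y v* ginv g y)"
    unfolding tangent_vec_def
  proof (intro allI impI)
    fix l assume "l < k"
    then have "ginv g y *v grad (\<Phi> l) y \<in> normal_space g \<Phi> k y"
      unfolding normal_space_def by (intro span_base) auto
    then have "grad (\<psi> i) y \<bullet> (ginv g y *v grad (\<Phi> l) y) = 0"
      using level_sets i by blast
    then show "grad (\<Phi> l) y \<bullet> (grad (\<psi> i) y v* ginv g y) = 0"
      by (metis dot_lmul_matrix inner_commute)
  qed
  then show ?thesis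
    by (intro contract_raise_eq_0) (use normal cs in \<open>auto simp: contract_def\<close>)
qed

lemma normal_integrableE:
  fixes g :: "real^'n::finite \<Rightarrow> real^'n^'n"
  assumes "normal_integrable g \<Phi> k U" "x \<in> U"
  obtains V and \<psi> :: "nat \<Rightarrow> real^'n \<Rightarrow> real"
  where "open V" "x \<in> V" "V \<subseteq> U" "\<forall>i < CARD('n) - k. smooth_on V (\<psi> i)"
    "\<And>y. y \<in> V \<Longrightarrow> {v. \<forall>i < CARD('n) - k. grad (\<psi> i) y \<bullet> v = 0} = normal_space g \<Phi> k y"
proof -
  obtain V and \<psi> :: "nat \<Rightarrow> real^'n \<Rightarrow> real" where V: "open V" "x \<in> V" "V \<subseteq> U"
    and \<psi>: "\<forall>i < CARD('n) - k. smooth_on V (\<psi> i)"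
    and basis: "\<forall>y\<in>V. lin_indep_fam (\<lambda>i. grad (\<psi> i) y) (CARD('n) - k) \<and>
                  {v. \<forall>i < CARD('n) - k. grad (\<psi> i) y \<bullet> v = 0} = normal_space g \<Phi> k y"
    using assms(1)[unfolded normal_integrable_def, rule_format, OF assms(2)] by (elim exE conjE) (rule that)
  show ?thesis
    by (rule that[OF V \<psi>]) (use basis in blast)
qed

theorem lemma7:
  fixes g :: "real^'n::finite \<Rightarrow> real^'n^'n"
    and U :: "(real^'n) set"
    and k :: nat
    and \<Phi> :: "nat \<Rightarrow> real^'n \<Rightarrow> real"
    and N :: "real^'n \<Rightarrow> 'n list \<Rightarrow> real"
  assumes U_open: "open U"
    and g_smooth: "\<forall>a b. smooth_on U (\<lambda>x. g x $ a $ b)"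
    and g_sym: "\<forall>x\<in>U. transpose (g x) = g x"
    and g_lor: "\<forall>x\<in>U. lorentzian_at g x"
    and k_pos: "1 \<le> k"
    and Phi_smooth: "\<forall>i<k. smooth_on U (\<Phi> i)"
    and Phi_subm: "\<forall>x\<in>U. lin_indep_fam (\<lambda>i. grad (\<Phi> i) x) k"
    and non_null: "\<forall>x\<in>U. non_null_at g \<Phi> k x"
    and integrable: "normal_integrable g \<Phi> k U"
    and N_smooth: "\<forall>as. smooth_on U (\<lambda>x. N x as)"
    and N_antisym: "\<forall>x\<in>U. \<forall>as i j. length as = k \<and> i < j \<and> j < k \<longrightarrow>
                      N x (as[i := as ! j, j := as ! i]) = - N x as"
    and N_normal: "\<forall>x\<in>U. \<forall>t. tangent_vec \<Phi> k x t \<longrightarrow>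
                      (\<forall>as j. length as = k \<and> j < k \<longrightarrow>
                         (\<Sum>a\<in>UNIV. t $ a * N x (as[j := a])) = 0)"
    and N_unit: "\<forall>x\<in>U. \<exists>s. normal_minus_signs g \<Phi> k x s \<and>
                      (\<Sum>as\<in>klists k. N x as * raise g N x as) = (-1) ^ s * fact k"
  shows "\<forall>x\<in>U. \<forall>t. tangent_vec \<Phi> k x t \<longrightarrow>
           (\<forall>bs j. length bs = k - 1 \<and> j < k - 1 \<longrightarrow>
              (\<Sum>b\<in>UNIV. (g x *v t) $ b * cov_div g (raise g N) x (bs[j := b])) = 0)"
proof (intro ballI allI impI)
  fix x t and bs :: "'n list" and j
  assume x: "x \<in> U" and t: "tangent_vec \<Phi> k x t" and bs: "length bs = k - 1 \<and> j < k - 1"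
  then have k: "k = Suc (length bs)" and j: "j < length bs"
    by auto
  have det: "\<forall>y\<in>U. det (g y) \<noteq> 0"
    using g_lor lorentzian_at_det_nonzero by blast
  obtain V and \<psi> :: "nat \<Rightarrow> real^'n \<Rightarrow> real" where V: "open V" "x \<in> V" "V \<subseteq> U"
    and \<psi>: "\<forall>i < CARD('n) - k. smooth_on V (\<psi> i)"
    and level_sets: "\<And>y. y \<in> V \<Longrightarrow> {v. \<forall>i < CARD('n) - k. grad (\<psi> i) y \<bullet> v = 0} = normal_space g \<Phi> k y"
    using normal_integrableE[OF integrable x] by blast
  have raise_diff: "(\<lambda>y. raise g N y as) differentiable (at x)" for as
    using differentiable_ginv[OF U_open x _ det] smooth_on_differentiable_at[OF U_open x] g_smooth N_smooth
    by (intro differentiable_raise) auto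
  have antisym: "raise g N x (a # bs[j := b]) = - raise g N x (b # bs[j := a])" for a b
    using raise_swap[of 0 "Suc j" "a # bs[j := b]" N x g] N_antisym x j k by simp
  have div: "contract (grad (\<psi> i) x) (cov_div g (raise g N) x) bs j = 0" if i: "i < CARD('n) - k" for i
  proof (rule contract_cov_div_eq_0[where M = "raise g N", OF V(1,2) _ raise_diff _ antisym _ j])
    show "Ck 2 V (\<psi> i)"
      using \<psi> i by (simp add: smooth_on_def)
    show "contract (grad (\<psi> i) y) (raise g N y) cs (Suc j) = 0"
      if "y \<in> V" "length cs = Suc (length bs)" for y cs
      by (rule contract_raise_normal_form_eq_0[OF _ level_sets[OF that(1)] i]) (use N_normal V(3) that j k in auto)
    show "christoffel g x a b c = christoffel g x a c b" for a b c
      by (rule christoffel_sym[OF U_open x g_sym])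
  qed
  have "g x *v t \<in> span ((\<lambda>i. grad (\<psi> i) x) ` {..<CARD('n) - k})"
    using det x g_sym t level_sets[OF V(2)] by (intro lowered_tangent_in_span) (auto simp: invertible_det_nz)
  then have "contract (g x *v t) (cov_div g (raise g N) x) bs j = 0"
    by (rule contract_span_eq_0) (use div in blast)
  then show "(\<Sum>b\<in>UNIV. (g x *v t) $ b * cov_div g (raise g N) x (bs[j := b])) = 0"
    unfolding contract_def .
qed

end
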